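(* Let $O=\langle B,E,F,\mathsf c\rangle$ be an occurrence net with associated conflict relation $\#$. Let $B^{\#}=\{\{e,e'\}\mid e\ \#\ e'\}$ (a set of fresh conditions) and $F^{\#}=\{(A,e)\mid A\in B^{\#},\ e\in A\}$. Then $O^{\#}=\langle B\cup B^{\#},E,F\cup F^{\#},\mathsf c\cup B^{\#}\rangle$ is an occurrence net and $O$ and $O^{\#}$ have the same configurations (equivalently, the same states).
   Context: A net $N=\langle S,T,F,\mathsf m\rangle$ consists of disjoint sets $S$ (places) and $T$ (transitions), flow $F\subseteq(S\times T)\cup(T\times S)$ and initial marking $\mathsf m$; ${}^\bullet x=\{y\mid(y,x)\in F\}$, $x^\bullet=\{y\mid(x,y)\in F\}$. $t$ is enabled at $m$ if ${}^\bullet t\subseteq m$; firing yields $m-{}^\bullet t+t^\bullet$. A state is the multiset of transitions of a finite firing sequence from $\mathsf m$; for occurrence nets (identity labelling) configurations are the states. A net is safe if every reachable marking has at most one token per place. $<_N$ is the transitive closure of $F$ and $\le_N$ its reflexive closure; $N$ is acyclic if $\le_N$ is a partial order. An occurrence net $O=\langle B,E,F,\mathsf c\rangle$ is an acyclic safe net such that: for every $b\in B$, ${}^\bullet b$ is empty or a singleton, and ${}^\bullet b=\emptyset$ for $b\in\mathsf c$; for every $b\in B$ there is $b'\in\mathsf c$ with $b'\le_O b$; for every $e\in E$ the set $\{e'\in E\mid e'\le_O e\}$ is finite; and the conflict relation $\#$, defined by $e\ \#_0\ e'$ iff $e\neq e'$ and ${}^\bullet e\cap{}^\bullet e'\neq\emptyset$,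 and $x\ \#\ x'$ iff there are $y\ \#_0\ y'$ with $y\le_O x$, $y'\le_O x'$, is irreflexive. *)

theory Defs
  imports Main "HOL-Library.Multiset"
begin

text \<open>The flow relation
  F \<subseteq> (S \<times> T) \<union> (T \<times> S) is split into its two parts pre (place-to-transition
  arcs) and post (transition-to-place arcs).\<close>

record ('p, 't) net =
  places :: "'p set"
  trans  :: "'t set"
  pre    :: "('p \<times> 't) set"
  post   :: "('t \<times> 'p) set"
  init   :: "'p set"

definition wf_net :: "('p, 't) net \<Rightarrow> bool" where
  "wf_net N \<longleftrightarrow> pre N \<subseteq> places N \<times> trans N \<and> post N \<subseteq> trans N \<times> places N
     \<and> init N \<subseteq> places N"

definition preT :: "('p, 't) net \<Rightarrow> 't \<Rightarrow> 'p set" where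
  "preT N t = {p. (p, t) \<in> pre N}"
definition postT :: "('p, 't) net \<Rightarrow> 't \<Rightarrow> 'p set" where
  "postT N t = {p. (t, p) \<in> post N}"
definition preP :: "('p, 't) net \<Rightarrow> 'p \<Rightarrow> 't set" where
  "preP N p = {t. (t, p) \<in> post N}"

type_synonym 'p marking = "'p \<Rightarrow> nat"

definition init_marking :: "('p, 't) net \<Rightarrow> 'p marking" where
  "init_marking N = (\<lambda>p. if p \<in> init N then 1 else 0)"

definition enabled :: "('p, 't) net \<Rightarrow> 'p marking \<Rightarrow> 't \<Rightarrow> bool" where
  "enabled N m t \<longleftrightarrow> (\<forall>p \<in> preT N t. m p \<ge> 1)"

definition fire :: "('p, 't) net \<Rightarrow> 'p marking \<Rightarrow> 't \<Rightarrow> 'p marking" where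
  "fire N m t = (\<lambda>p. m p - (if p \<in> preT N t then 1 else 0) + (if p \<in> postT N t then 1 else 0))"

fun fireseq :: "('p, 't) net \<Rightarrow> 'p marking \<Rightarrow> 't list \<Rightarrow> 'p marking option" where
  "fireseq N m [] = Some m"
| "fireseq N m (t # ts) =
     (if t \<in> trans N \<and> enabled N m t then fireseq N (fire N m t) ts else None)"

definition reachable :: "('p, 't) net \<Rightarrow> 'p marking set" where
  "reachable N = {m. \<exists>ts. fireseq N (init_marking N) ts = Some m}"

text \<open>States: multisets of transitions of finite firing sequences from the initial marking.
  For occurrence nets these are the configurations.\<close>
definition states :: "('p, 't) net \<Rightarrow> 't multiset set" where
  "states N = {mset ts | ts. fireseq N (init_marking N) ts \<noteq> None}"

abbreviation configurations :: "('p, 't) net \<Rightarrow> 't multiset set" where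
  "configurations N \<equiv> states N"

definition safe :: "('p, 't) net \<Rightarrow> bool" where
  "safe N \<longleftrightarrow> (\<forall>m \<in> reachable N. \<forall>p. m p \<le> 1)"

definition flow :: "('p, 't) net \<Rightarrow> ('p + 't) rel" where
  "flow N = {(Inl p, Inr t) | p t. (p, t) \<in> pre N} \<union> {(Inr t, Inl p) | t p. (t, p) \<in> post N}"

definition lt_N :: "('p, 't) net \<Rightarrow> ('p + 't) rel" where
  "lt_N N = (flow N)\<^sup>+"

definition le_N :: "('p, 't) net \<Rightarrow> ('p + 't) rel" where
  "le_N N = (flow N)\<^sup>*"

definition nodes :: "('p, 't) net \<Rightarrow> ('p + 't) set" where
  "nodes N = Inl ` places N \<union> Inr ` trans N"

definition acyclic_net :: "('p, 't) net \<Rightarrow> bool" where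
  "acyclic_net N \<longleftrightarrow> partial_order_on (nodes N) (le_N N \<inter> nodes N \<times> nodes N)"

definition conflict0 :: "('p, 't) net \<Rightarrow> 't \<Rightarrow> 't \<Rightarrow> bool" where
  "conflict0 N e e' \<longleftrightarrow> e \<in> trans N \<and> e' \<in> trans N \<and> e \<noteq> e' \<and> preT N e \<inter> preT N e' \<noteq> {}"

definition conflict :: "('p, 't) net \<Rightarrow> ('p + 't) \<Rightarrow> ('p + 't) \<Rightarrow> bool" where
  "conflict N x x' \<longleftrightarrow> (\<exists>y y'. conflict0 N y y' \<and> (Inr y, x) \<in> le_N N \<and> (Inr y', x') \<in> le_N N)"

definition occurrence_net :: "('p, 't) net \<Rightarrow> bool" where
  "occurrence_net ON \<longleftrightarrow>
     wf_net ON \<and> acyclic_net ON \<and> safe ON \<and>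
     (\<forall>b \<in> places ON. preP ON b = {} \<or> (\<exists>e. preP ON b = {e})) \<and>
     (\<forall>b \<in> init ON. preP ON b = {}) \<and>
     (\<forall>b \<in> places ON. \<exists>b' \<in> init ON. (Inl b', Inl b) \<in> le_N ON) \<and>
     (\<forall>e \<in> trans ON. finite {e' \<in> trans ON. (Inr e', Inr e) \<in> le_N ON}) \<and>
     (\<forall>x. \<not> conflict ON x x)"

text \<open>The construction ON^#: fresh conditions {e,e'} for conflicting events,
  made disjoint from B via the sum type.\<close>
definition Bsharp :: "('p, 't) net \<Rightarrow> 't set set" where
  "Bsharp ON = {{e, e'} | e e'. conflict ON (Inr e) (Inr e')}"

definition sharp :: "('p, 't) net \<Rightarrow> ('p + 't set, 't) net" where
  "sharp ON = \<lparr> places = Inl ` places ON \<union> Inr ` Bsharp ON,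
               trans = trans ON,
               pre = {(Inl b, e) | b e. (b, e) \<in> pre ON} \<union> {(Inr A, e) | A e. A \<in> Bsharp ON \<and> e \<in> A},
               post = {(e, Inl b) | e b. (e, b) \<in> post ON},
               init = Inl ` init ON \<union> Inr ` Bsharp ON \<rparr>"

end

theory Submission
  imports Defs
begin

(* Along a firing sequence of an occurrence net every place is consumed at most once:
   its unique producer has a precondition, which by induction is consumed at most once.
   Hence the events of a firing sequence are causally closed and conflict-free, so at
   most one event of a fresh condition {e, e'} ever fires and the condition stays marked
   until it does.  Therefore firing sequences of O lift to O#, and conversely they project
   back since O# only adds preconditions.  The fresh conditions are initial and have no
   incoming arcs, so they leave the causal order between old nodes unchanged, and they
   only put into immediate conflict events that were already in conflict. *)

abbreviation fires_to :: "('p, 't) net \<Rightarrow> 't list \<Rightarrow> 'p marking \<Rightarrow> bool" where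
  "fires_to N ts m \<equiv> fireseq N (init_marking N) ts = Some m"

lemma fireseq_snoc:
  "fireseq N m (ts @ [t]) = (case fireseq N m ts of None \<Rightarrow> None
     | Some m' \<Rightarrow> if t \<in> trans N \<and> enabled N m' t then Some (fire N m' t) else None)"
  by (induction ts arbitrary: m) auto

lemma fires_to_snocE:
  assumes "fires_to N (ts @ [t]) m"
  obtains m0 where "fires_to N ts m0" "t \<in> trans N" "enabled N m0 t" "m = fire N m0 t"
  using assms by (auto simp: fireseq_snoc split: option.splits if_splits)

lemma flow_iff:
  "(u, v) \<in> flow N \<longleftrightarrow>
     (\<exists>p t. u = Inl p \<and> v = Inr t \<and> (p, t) \<in> pre N) \<or> (\<exists>p t. u = Inr t \<and> v = Inl p \<and> (t, p) \<in> post N)"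
  unfolding flow_def by auto

lemma acyclic_net_iff:
  "acyclic_net N \<longleftrightarrow>
     (\<forall>x\<in>nodes N. \<forall>y\<in>nodes N. (x, y) \<in> (flow N)\<^sup>* \<longrightarrow> (y, x) \<in> (flow N)\<^sup>* \<longrightarrow> x = y)"
  unfolding acyclic_net_def partial_order_on_def preorder_on_def refl_on_def trans_on_def
    antisym_on_def le_N_def
  by (blast intro: rtrancl_trans)

lemma conflict_sym: "conflict N x x' \<Longrightarrow> conflict N x' x"
  unfolding conflict_def conflict0_def by blast

lemma conflict_inherited:
  "conflict N x x' \<Longrightarrow> (x, z) \<in> le_N N \<Longrightarrow> (x', z') \<in> le_N N \<Longrightarrow> conflict N z z'"
  unfolding conflict_def le_N_def by (blast intro: rtrancl_trans)

lemma conflict_event: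
  assumes "wf_net N" "conflict N (Inr e) x"
  shows "e \<in> trans N \<and> preT N e \<noteq> {}"
proof -
  obtain y y' where y: "conflict0 N y y'" "(Inr y, Inr e) \<in> (flow N)\<^sup>*"
    using assms(2) unfolding conflict_def le_N_def by blast
  show ?thesis
  proof (cases "y = e")
    case True
    then show ?thesis using y(1) unfolding conflict0_def by blast
  next
    case False
    then obtain z where "(z, Inr e) \<in> flow N"
      using y(2) by (blast elim: rtranclE)
    then obtain q where "(q, e) \<in> pre N" by (auto simp: flow_iff)
    then show ?thesis using assms(1) by (auto simp: preT_def wf_net_def)
  qed
qed

lemma length_filter_mono:
  "(\<And>x. x \<in> set xs \<Longrightarrow> P x \<Longrightarrow> Q x) \<Longrightarrow> length (filter P xs) \<le> length (filter Q xs)"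
  by (induction xs) auto

lemma length_filter_pos_iff: "0 < length (filter P xs) \<longleftrightarrow> (\<exists>x\<in>set xs. P x)"
  by (induction xs) auto

lemma two_le_length_filter:
  assumes "x \<in> set xs" "y \<in> set xs" "x \<noteq> y" "P x" "P y"
  shows "2 \<le> length (filter P xs)"
proof -
  have "card {x, y} \<le> card (set (filter P xs))"
    using assms by (intro card_mono) auto
  also have "\<dots> \<le> length (filter P xs)" by (rule card_length)
  finally show ?thesis using assms(3) by simp
qed

section \<open>Firing sequences of an occurrence net\<close>

locale occurrence =
  fixes ON :: "('p, 't) net"
  assumes occurrence_net: "occurrence_net ON"
begin

lemma
  shows wf_ON: "wf_net ON"
    and acyclic_ON: "acyclic_net ON"
    and safe_ON: "safe ON"
    and preP_ON: "b \<in> places ON \<Longrightarrow> preP ON b = {} \<or> (\<exists>e. preP ON b = {e})"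
    and init_preP_ON: "b \<in> init ON \<Longrightarrow> preP ON b = {}"
    and rooted_ON: "b \<in> places ON \<Longrightarrow> \<exists>b'\<in>init ON. (Inl b', Inl b) \<in> le_N ON"
    and finite_causes_ON: "e \<in> trans ON \<Longrightarrow> finite {e' \<in> trans ON. (Inr e', Inr e) \<in> le_N ON}"
    and conflict_irrefl_ON: "\<not> conflict ON x x"
  using occurrence_net unfolding occurrence_net_def by blast+

lemma preP_at_most_one: "preP ON b = {} \<or> (\<exists>e. preP ON b = {e})"
  using preP_ON wf_ON by (fastforce simp: preP_def wf_net_def)

lemma preT_nonempty_if_post:
  assumes "(e, b) \<in> post ON"
  shows "preT ON e \<noteq> {}"
proof -
  \<comment> \<open>Trace b back to an initial condition: the arc reaching b comes from its unique
    producer e, and the arc reaching e comes from a precondition.\<close>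
  have b: "b \<in> places ON" "e \<in> preP ON b"
    using assms wf_ON by (auto simp: preP_def wf_net_def)
  obtain b' where b': "b' \<in> init ON" "(Inl b', Inl b) \<in> (flow ON)\<^sup>*"
    using rooted_ON[OF b(1)] unfolding le_N_def by blast
  have "b' \<noteq> b" using init_preP_ON b b' by auto
  then obtain z where "(Inl b', z) \<in> (flow ON)\<^sup>*" "(z, Inl b) \<in> flow ON"
    using b'(2) by (blast elim: rtranclE)
  then obtain t where t: "(Inl b', Inr t) \<in> (flow ON)\<^sup>*" "(t, b) \<in> post ON"
    by (auto simp: flow_iff)
  then have "t \<in> preP ON b" by (simp add: preP_def)
  with b preP_ON[OF b(1)] have "t = e" by auto
  obtain z' where "(z', Inr t) \<in> flow ON"
    using t(1) by (blast elim: rtranclE)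
  then obtain q where "(q, t) \<in> pre ON" by (auto simp: flow_iff)
  then show ?thesis using \<open>t = e\<close> by (auto simp: preT_def)
qed

definition consumed :: "'t list \<Rightarrow> 'p \<Rightarrow> nat" where
  "consumed ts b = length (filter (\<lambda>e. b \<in> preT ON e) ts)"

definition produced :: "'t list \<Rightarrow> 'p \<Rightarrow> nat" where
  "produced ts b = length (filter (\<lambda>e. b \<in> postT ON e) ts)"

lemma token_balance:
  "fires_to ON ts m \<Longrightarrow> m b + consumed ts b = (if b \<in> init ON then 1 else 0) + produced ts b"
proof (induction ts arbitrary: m rule: rev_induct)
  case Nil
  then show ?case by (auto simp: consumed_def produced_def init_marking_def)
next
  case (snoc t ts)
  then obtain m0 where m0: "fires_to ON ts m0" "enabled ON m0 t" "m = fire ON m0 t"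
    by (elim fires_to_snocE)
  have "b \<in> preT ON t \<Longrightarrow> 1 \<le> m0 b" using m0(2) by (auto simp: enabled_def)
  then show ?case
    using snoc.IH[OF m0(1)] m0(3) by (auto simp: fire_def consumed_def produced_def)
qed

text \<open>The producer of a non-initial place has a precondition, whose consumptions bound the
  productions of the place.\<close>

lemma supply_le_one:
  assumes "\<And>q. consumed ts q \<le> 1"
  shows "(if b \<in> init ON then 1 else 0) + produced ts b \<le> 1"
  using preP_at_most_one[of b]
proof
  assume "preP ON b = {}"
  then have "produced ts b = 0"
    by (auto simp: produced_def preP_def postT_def filter_empty_conv)
  then show ?thesis by simp
next
  assume "\<exists>e. preP ON b = {e}"
  then obtain e where e: "preP ON b = {e}" by blast
  then have "b \<notin> init ON" using init_preP_ON by auto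
  have "(e, b) \<in> post ON" using e by (auto simp: preP_def)
  then obtain q where q: "q \<in> preT ON e" using preT_nonempty_if_post by blast
  have "produced ts b \<le> consumed ts q"
    unfolding produced_def consumed_def
    by (rule length_filter_mono) (use e q in \<open>auto simp: postT_def preP_def\<close>)
  then show ?thesis using \<open>b \<notin> init ON\<close> assms[of q] by simp
qed

lemma consumed_le_one: "fires_to ON ts m \<Longrightarrow> consumed ts b \<le> 1"
proof (induction ts arbitrary: m b rule: rev_induct)
  case Nil
  then show ?case by (simp add: consumed_def)
next
  case (snoc t ts)
  then obtain m0 where m0: "fires_to ON ts m0" "enabled ON m0 t"
    by (elim fires_to_snocE)
  have IH: "\<And>q. consumed ts q \<le> 1" using snoc.IH[OF m0(1)] .
  show ?case
  proof (cases "b \<in> preT ON t")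
    case True
    then have "1 \<le> m0 b" using m0(2) by (auto simp: enabled_def)
    then have "consumed ts b = 0"
      using token_balance[OF m0(1), of b] supply_le_one[OF IH, of b] by linarith
    then show ?thesis by (simp add: consumed_def)
  next
    case False
    then show ?thesis using IH[of b] by (simp add: consumed_def)
  qed
qed

lemma consumed_place_supplied:
  assumes "fires_to ON ts m" "t \<in> set ts" "b \<in> preT ON t"
  shows "b \<in> init ON \<or> (\<exists>e\<in>set ts. b \<in> postT ON e)"
proof -
  have "0 < consumed ts b"
    unfolding consumed_def length_filter_pos_iff using assms(2,3) by blast
  then have "b \<in> init ON \<or> 0 < produced ts b"
    using token_balance[OF assms(1), of b] by (auto split: if_splits)
  then show ?thesis unfolding produced_def length_filter_pos_iff .
qed

lemma fires_to_causally_closed: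
  assumes "fires_to ON ts m" "e \<in> set ts" "(x, Inr e) \<in> (flow ON)\<^sup>*"
  shows "case x of Inr y \<Rightarrow> y \<in> set ts | Inl b \<Rightarrow> b \<in> init ON \<or> (\<exists>e'\<in>set ts. b \<in> postT ON e')"
  using assms(3)
proof (induction rule: converse_rtrancl_induct)
  case base
  then show ?case using assms(2) by simp
next
  case (step x z)
  from step(1) show ?case unfolding flow_iff
  proof (elim disjE exE conjE)
    fix b t
    assume "x = Inl b" "z = Inr t" "(b, t) \<in> pre ON"
    then show ?thesis
      using step(3) consumed_place_supplied[OF assms(1), of t b] by (auto simp: preT_def)
  next
    fix b t
    assume xz: "x = Inr t" "z = Inl b" "(t, b) \<in> post ON"
    then have t: "t \<in> preP ON b" by (simp add: preP_def)
    then have "b \<notin> init ON" using init_preP_ON by auto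
    then obtain e' where "e' \<in> set ts" "e' \<in> preP ON b"
      using step(3) xz by (auto simp: postT_def preP_def)
    with t show ?thesis using preP_at_most_one[of b] xz by auto
  qed
qed

lemma fires_to_conflict_free:
  assumes "fires_to ON ts m" "conflict ON (Inr e) (Inr e')" "e \<in> set ts" "e' \<in> set ts"
  shows False
proof -
  obtain y y' where y: "conflict0 ON y y'" "(Inr y, Inr e) \<in> (flow ON)\<^sup>*" "(Inr y', Inr e') \<in> (flow ON)\<^sup>*"
    using assms(2) unfolding conflict_def le_N_def by blast
  have "y \<in> set ts" "y' \<in> set ts"
    using fires_to_causally_closed[OF assms(1) assms(3) y(2)]
      fires_to_causally_closed[OF assms(1) assms(4) y(3)] by simp_all
  moreover obtain b where "b \<in> preT ON y" "b \<in> preT ON y'" "y \<noteq> y'"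
    using y(1) unfolding conflict0_def by blast
  ultimately have "2 \<le> consumed ts b"
    unfolding consumed_def by (intro two_le_length_filter)
  then show False using consumed_le_one[OF assms(1), of b] by simp
qed

lemma fires_to_Bsharp_at_most_one:
  assumes "fires_to ON ts m" "A \<in> Bsharp ON"
  shows "length (filter (\<lambda>x. x \<in> A) ts) \<le> 1"
proof -
  obtain e e' where A: "A = {e, e'}" and c: "conflict ON (Inr e) (Inr e')"
    using assms(2) unfolding Bsharp_def by blast
  then obtain f where f: "f \<in> A" "\<forall>x\<in>set ts. x \<in> A \<longrightarrow> x = f"
    using fires_to_conflict_free[OF assms(1)] by blast
  have "preT ON e \<noteq> {}" "preT ON e' \<noteq> {}"
    using conflict_event[OF wf_ON c] conflict_event[OF wf_ON conflict_sym[OF c]] by blast+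
  then obtain q where "q \<in> preT ON f" using f(1) A by auto
  then have "length (filter (\<lambda>x. x \<in> A) ts) \<le> consumed ts q"
    unfolding consumed_def using f by (intro length_filter_mono) auto
  then show ?thesis using consumed_le_one[OF assms(1), of q] by linarith
qed

end

section \<open>The net \<open>O\<^sup>#\<close>\<close>

abbreviation old_node :: "'p + 't \<Rightarrow> ('p + 't set) + 't" where
  "old_node \<equiv> map_sum Inl id"

lemma old_node_inject [simp]: "old_node x = old_node y \<longleftrightarrow> x = y"
  by (cases x; cases y) auto

lemma old_node_neq_fresh [simp]: "old_node x \<noteq> Inl (Inr A)" "Inl (Inr A) \<noteq> old_node x"
  by (cases x; simp)+

lemma old_node_eq_Inr [simp]: "old_node x = Inr e \<longleftrightarrow> x = Inr e" "Inr e = old_node x \<longleftrightarrow> x = Inr e"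
  by (cases x; auto)+

lemma node_sharp_cases:
  obtains x where "v = old_node x" | A where "v = Inl (Inr A)"
proof (cases v)
  case (Inl p)
  then show ?thesis using that by (cases p) (metis map_sum.simps(1), blast)
next
  case (Inr e)
  then show ?thesis using that by (metis id_apply map_sum.simps(2))
qed

lemma sharp_simps:
  "trans (sharp N) = trans N"
  "places (sharp N) = Inl ` places N \<union> Inr ` Bsharp N"
  "init (sharp N) = Inl ` init N \<union> Inr ` Bsharp N"
  by (simp_all add: sharp_def)

lemma preT_sharp: "preT (sharp N) t = Inl ` preT N t \<union> Inr ` {A \<in> Bsharp N. t \<in> A}"
  by (auto simp: sharp_def preT_def)

lemma postT_sharp: "postT (sharp N) t = Inl ` postT N t"
  by (auto simp: sharp_def postT_def)

lemma preP_sharp: "preP (sharp N) (Inl b) = preP N b" "preP (sharp N) (Inr A) = {}"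
  by (auto simp: sharp_def preP_def)

lemma flow_sharp:
  "(u, v) \<in> flow (sharp N) \<longleftrightarrow>
     (\<exists>x y. u = old_node x \<and> v = old_node y \<and> (x, y) \<in> flow N)
     \<or> (\<exists>A e. u = Inl (Inr A) \<and> v = Inr e \<and> A \<in> Bsharp N \<and> e \<in> A)"
  (is "_ \<longleftrightarrow> ?old \<or> ?fresh")
proof
  assume "(u, v) \<in> flow (sharp N)"
  then show "?old \<or> ?fresh"
    unfolding flow_iff sharp_def
    by (elim disjE exE conjE; simp) (metis flow_iff map_sum.simps id_apply)+
qed (auto simp: flow_iff sharp_def)

lemma rtrancl_flow_sharp_from_old:
  "(old_node x, v) \<in> (flow (sharp N))\<^sup>* \<longleftrightarrow> (\<exists>y. v = old_node y \<and> (x, y) \<in> (flow N)\<^sup>*)"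
proof
  assume "(old_node x, v) \<in> (flow (sharp N))\<^sup>*"
  then show "\<exists>y. v = old_node y \<and> (x, y) \<in> (flow N)\<^sup>*"
  proof (induction rule: rtrancl_induct)
    case (step v w)
    then obtain y where y: "v = old_node y" "(x, y) \<in> (flow N)\<^sup>*" by blast
    with step(2) obtain z where "(y, z) \<in> flow N" "w = old_node z"
      unfolding flow_sharp by auto
    with y show ?case by (blast intro: rtrancl_into_rtrancl)
  qed blast
next
  assume "\<exists>y. v = old_node y \<and> (x, y) \<in> (flow N)\<^sup>*"
  then obtain y where "v = old_node y" "(x, y) \<in> (flow N)\<^sup>*" by blast
  moreover have "(old_node x, old_node y) \<in> (flow (sharp N))\<^sup>*" if "(x, y) \<in> (flow N)\<^sup>*" for y
    using that
  proof induction
    case (step y z)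
    then have "(old_node y, old_node z) \<in> flow (sharp N)" unfolding flow_sharp by blast
    with step.IH show ?case by (rule rtrancl_into_rtrancl)
  qed simp
  ultimately show "(old_node x, v) \<in> (flow (sharp N))\<^sup>*" by blast
qed

lemma rtrancl_flow_sharp_to_fresh:
  "(u, Inl (Inr A)) \<in> (flow (sharp N))\<^sup>* \<Longrightarrow> u = Inl (Inr A)"
  by (erule rtranclE) (auto simp: flow_sharp)

lemma le_N_sharp_events: "(Inr e', Inr e) \<in> le_N (sharp N) \<longleftrightarrow> (Inr e', Inr e) \<in> le_N N"
  using rtrancl_flow_sharp_from_old[of "Inr e'" "Inr e" N] by (auto simp: le_N_def)

lemma old_node_in_nodes_sharp: "old_node x \<in> nodes (sharp N) \<longleftrightarrow> x \<in> nodes N"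
  by (cases x) (auto simp: nodes_def sharp_def image_Un inj_image_mem_iff)

lemma acyclic_net_sharp:
  assumes "acyclic_net N"
  shows "acyclic_net (sharp N)"
  unfolding acyclic_net_iff
proof (intro ballI impI)
  fix a b
  assume nodes: "a \<in> nodes (sharp N)" "b \<in> nodes (sharp N)"
    and ab: "(a, b) \<in> (flow (sharp N))\<^sup>*" and ba: "(b, a) \<in> (flow (sharp N))\<^sup>*"
  show "a = b"
  proof (cases a rule: node_sharp_cases)
    case (1 x)
    from ab obtain y where y: "b = old_node y" "(x, y) \<in> (flow N)\<^sup>*"
      unfolding 1 rtrancl_flow_sharp_from_old by blast
    from ba have "(y, x) \<in> (flow N)\<^sup>*"
      unfolding 1 y(1) rtrancl_flow_sharp_from_old by simp
    moreover have "x \<in> nodes N" "y \<in> nodes N"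
      using nodes unfolding 1 y(1) old_node_in_nodes_sharp by simp_all
    ultimately have "x = y" using assms y(2) unfolding acyclic_net_iff by blast
    then show "a = b" using 1 y(1) by simp
  next
    case (2 A)
    then show "a = b" using ba rtrancl_flow_sharp_to_fresh by blast
  qed
qed

lemma Bsharp_conflict:
  assumes "A \<in> Bsharp N" "y \<in> A" "y' \<in> A" "y \<noteq> y'"
  shows "conflict N (Inr y) (Inr y')"
proof -
  obtain e e' where A: "A = {e, e'}" "conflict N (Inr e) (Inr e')"
    using assms(1) unfolding Bsharp_def by blast
  then have "y = e \<and> y' = e' \<or> y = e' \<and> y' = e" using assms(2-4) by blast
  then show ?thesis using A(2) conflict_sym by blast
qed

lemma conflict0_sharp: "conflict0 (sharp N) y y' \<Longrightarrow> conflict N (Inr y) (Inr y')"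
proof -
  assume c: "conflict0 (sharp N) y y'"
  then obtain q where q: "q \<in> preT (sharp N) y" "q \<in> preT (sharp N) y'"
    unfolding conflict0_def by blast
  have y: "y \<in> trans N" "y' \<in> trans N" "y \<noteq> y'"
    using c unfolding conflict0_def sharp_simps by blast+
  show ?thesis
  proof (cases q)
    case (Inl b)
    then have "b \<in> preT N y" "b \<in> preT N y'" using q by (auto simp: preT_sharp)
    with y have "conflict0 N y y'" unfolding conflict0_def by blast
    then show ?thesis unfolding conflict_def le_N_def by blast
  next
    case (Inr A)
    then have "A \<in> Bsharp N" "y \<in> A" "y' \<in> A" using q by (auto simp: preT_sharp)
    then show ?thesis using y(3) by (rule Bsharp_conflict)
  qed
qed

lemma conflict_sharp:
  assumes "conflict (sharp N) x x'"
  shows "\<exists>z z'. x = old_node z \<and> x' = old_node z' \<and> conflict N z z'"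
proof -
  obtain y y' where y: "conflict0 (sharp N) y y'"
    "(old_node (Inr y), x) \<in> (flow (sharp N))\<^sup>*" "(old_node (Inr y'), x') \<in> (flow (sharp N))\<^sup>*"
    using assms unfolding conflict_def le_N_def by auto
  obtain z z' where z: "x = old_node z" "(Inr y, z) \<in> le_N N" "x' = old_node z'" "(Inr y', z') \<in> le_N N"
    using y(2,3) unfolding rtrancl_flow_sharp_from_old le_N_def by blast
  then show ?thesis using conflict_inherited[OF conflict0_sharp[OF y(1)]] by blast
qed

lemma conflict_irrefl_sharp:
  assumes "\<And>x. \<not> conflict N x x"
  shows "\<not> conflict (sharp N) x x"
  using conflict_sharp[of N x x] assms by auto

lemma fires_to_sharp_project:
  "fires_to (sharp N) ts m \<Longrightarrow> fires_to N ts (m \<circ> Inl)"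
proof (induction ts arbitrary: m rule: rev_induct)
  case Nil
  then show ?case by (auto simp: init_marking_def sharp_simps)
next
  case (snoc t ts)
  then obtain m0 where m0: "fires_to (sharp N) ts m0" "t \<in> trans N" "enabled (sharp N) m0 t"
      "m = fire (sharp N) m0 t"
    by (auto simp: sharp_simps elim: fires_to_snocE)
  have "enabled N (m0 \<circ> Inl) t" "fire N (m0 \<circ> Inl) t = m \<circ> Inl"
    using m0(3,4) by (auto simp: enabled_def fire_def preT_sharp postT_sharp)
  then show ?case
    using snoc.IH[OF m0(1)] m0(2) by (simp add: fireseq_snoc comp_def)
qed

context occurrence
begin

definition sharp_marking :: "'t list \<Rightarrow> 'p marking \<Rightarrow> ('p + 't set) marking" where
  "sharp_marking ts m = (\<lambda>q. case q of Inl b \<Rightarrow> m b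
     | Inr A \<Rightarrow> if A \<in> Bsharp ON then 1 - length (filter (\<lambda>x. x \<in> A) ts) else 0)"

lemma fires_to_sharp_lift:
  "fires_to ON ts m \<Longrightarrow> fires_to (sharp ON) ts (sharp_marking ts m)"
proof (induction ts arbitrary: m rule: rev_induct)
  case Nil
  have "init_marking (sharp ON) = sharp_marking [] (init_marking ON)"
    by (auto simp: init_marking_def sharp_marking_def sharp_simps split: sum.split)
  then show ?case using Nil by simp
next
  case (snoc t ts)
  then obtain m0 where m0: "fires_to ON ts m0" "t \<in> trans ON" "enabled ON m0 t" "m = fire ON m0 t"
    by (elim fires_to_snocE)
  have unfired: "length (filter (\<lambda>x. x \<in> A) ts) = 0" if "A \<in> Bsharp ON" "t \<in> A" for A
    using fires_to_Bsharp_at_most_one[OF snoc.prems that(1)] that(2) by simp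
  have "enabled (sharp ON) (sharp_marking ts m0) t"
    using m0(3) unfired by (auto simp: enabled_def preT_sharp sharp_marking_def)
  moreover have "fire (sharp ON) (sharp_marking ts m0) t = sharp_marking (ts @ [t]) m"
    using unfired
    by (auto simp: fire_def preT_sharp postT_sharp sharp_marking_def m0(4) split: sum.split)
  ultimately show ?case
    using snoc.IH[OF m0(1)] m0(2) by (simp add: fireseq_snoc sharp_simps)
qed

lemma states_sharp: "states (sharp ON) = states ON"
  unfolding states_def
  using fires_to_sharp_project fires_to_sharp_lift by fast

lemma safe_sharp: "safe (sharp ON)"
  unfolding safe_def reachable_def
proof (intro ballI allI, clarify)
  fix q ts m
  assume m: "fires_to (sharp ON) ts m"
  then have old: "fires_to ON ts (m \<circ> Inl)" by (rule fires_to_sharp_project)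
  \<comment> \<open>firing is deterministic, so \<open>m\<close> is the lifted marking\<close>
  have eq: "m = sharp_marking ts (m \<circ> Inl)"
    using fires_to_sharp_lift[OF old] m by simp
  have "m (Inr A) \<le> 1" for A
    using fun_cong[OF eq, of "Inr A"] by (simp add: sharp_marking_def)
  moreover have "m (Inl b) \<le> 1" for b
    using safe_ON old unfolding safe_def reachable_def by auto
  ultimately show "m q \<le> 1" by (cases q) auto
qed

lemma wf_net_sharp: "wf_net (sharp ON)"
proof -
  have "A \<in> Bsharp ON \<Longrightarrow> e \<in> A \<Longrightarrow> e \<in> trans ON" for A e
    using conflict_event[OF wf_ON] conflict_sym unfolding Bsharp_def by blast
  then show ?thesis using wf_ON unfolding wf_net_def sharp_def by auto
qed

lemma rooted_sharp:
  assumes "b \<in> places (sharp ON)"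
  shows "\<exists>b'\<in>init (sharp ON). (Inl b', Inl b) \<in> le_N (sharp ON)"
  using assms[unfolded sharp_simps]
proof (elim UnE imageE)
  fix b0
  assume "b = Inl b0" "b0 \<in> places ON"
  then obtain b' where b': "b' \<in> init ON" "(Inl b', Inl b0) \<in> le_N ON"
    using rooted_ON by blast
  have "(old_node (Inl b'), old_node (Inl b0)) \<in> (flow (sharp ON))\<^sup>*"
    using b'(2) unfolding rtrancl_flow_sharp_from_old le_N_def by blast
  moreover have "Inl b' \<in> init (sharp ON)" using b'(1) by (simp add: sharp_simps)
  ultimately show ?thesis using \<open>b = Inl b0\<close> by (auto simp: le_N_def)
qed (auto simp: le_N_def sharp_simps)

lemma occurrence_net_sharp: "occurrence_net (sharp ON)"
  unfolding occurrence_net_def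
proof (intro conjI ballI allI)
  show "wf_net (sharp ON)" by (rule wf_net_sharp)
  show "acyclic_net (sharp ON)" using acyclic_ON by (rule acyclic_net_sharp)
  show "safe (sharp ON)" by (rule safe_sharp)
  show "\<not> conflict (sharp ON) x x" for x
    using conflict_irrefl_ON by (rule conflict_irrefl_sharp)
  fix b
  show "preP (sharp ON) b = {} \<or> (\<exists>e. preP (sharp ON) b = {e})"
    using preP_at_most_one by (cases b) (auto simp: preP_sharp)
  show "b \<in> init (sharp ON) \<Longrightarrow> preP (sharp ON) b = {}"
    using init_preP_ON by (auto simp: sharp_simps preP_sharp)
  show "b \<in> places (sharp ON) \<Longrightarrow> \<exists>b'\<in>init (sharp ON). (Inl b', Inl b) \<in> le_N (sharp ON)"
    by (rule rooted_sharp)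
next
  fix e
  assume "e \<in> trans (sharp ON)"
  then show "finite {e' \<in> trans (sharp ON). (Inr e', Inr e) \<in> le_N (sharp ON)}"
    using finite_causes_ON by (simp add: sharp_simps le_N_sharp_events)
qed

end

theorem mainTheorem9:
  fixes ON :: "('p, 't) net"
  assumes "occurrence_net ON"
  shows "occurrence_net (sharp ON) \<and> configurations (sharp ON) = configurations ON"
proof -
  interpret occurrence ON using assms by unfold_locales
  show ?thesis using occurrence_net_sharp states_sharp by blast
qed

end
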